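(* The boxed ramified monoid $\mathcal{BR}(\mathfrak{S}_n)$ is generated by $e_1,\ldots,e_{n-1}$ and $z_1,\ldots,z_{n-1}$.
   Context: $\mathfrak{C}_n$ is the partition monoid: set partitions of $[2n]$ (top points $1,\dots,n$, bottom points $n+1,\dots,2n$) with concatenation product $I*J$ (identify bottom point $n+i$ of $I$ with top point $i$ of $J$, join blocks transitively, delete the middle points). $I\preceq J$ means each block of $J$ is a union of blocks of $I$. $\mathfrak{S}_n\subseteq\mathfrak{C}_n$ consists of the partitions with all blocks of the form $\{i,n+j\}$; $s_i$ is the simple transposition; $1=\{\{i,n+i\}\}$. A set partition $J$ of $[2n]$ is boxed if $1\preceq J$ and the restriction of $J$ to $[n]$ is linear (all blocks intervals). For a submonoid $M\subseteq\mathfrak{C}_n$, $\mathcal{BR}(M)$ is the set of pairs $(I,J)$ with $I\in M$, $J$ boxed and $I\preceq J$, with product $(I,J)(H,K)=(I*H,J*K)$. Let $b_i$ be obtained from $1$ by merging the blocks $\{i,n+i\}$ and $\{i+1,n+i+1\}$; set $e_i=(1,b_i)$ and $z_i=(s_i,b_i)$ for $i\in[n-1]$. *)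

theory Defs
  imports "HOL-Library.Disjoint_Sets"
begin

text \<open>Set partitions of [2n] = {1..2n}: top points 1..n, bottom points n+1..2n.
  A partition is represented as its set of blocks.\<close>

type_synonym spart = "nat set set"

definition cpart :: "nat \<Rightarrow> spart set" where
  "cpart n = {P. partition_on {1..2*n} P}"

definition samebl :: "spart \<Rightarrow> nat \<Rightarrow> nat \<Rightarrow> bool" where
  "samebl P x y \<longleftrightarrow> (\<exists>B\<in>P. x \<in> B \<and> y \<in> B)"

text \<open>Points of I keep their labels (its bottom points n+i become
  the middle points n+i); points of J are shifted: top i of J becomes the middle point n+i,
  bottom n+i of J becomes 2n+i. Blocks are joined transitively, middle points deleted.\<close>

definition concat_rel :: "nat \<Rightarrow> spart \<Rightarrow> spart \<Rightarrow> (nat \<times> nat) set" where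
  "concat_rel n I J =
     {(x, y). samebl I x y} \<union> {(x + n, y + n) | x y. samebl J x y}"

definition outpt :: "nat \<Rightarrow> nat \<Rightarrow> nat" where
  "outpt n x = (if x \<le> n then x else x + n)"

definition concat :: "nat \<Rightarrow> spart \<Rightarrow> spart \<Rightarrow> spart" where
  "concat n I J =
     (\<lambda>x. {y \<in> {1..2*n}. (outpt n x, outpt n y) \<in> (concat_rel n I J)\<^sup>*}) ` {1..2*n}"

definition refines :: "spart \<Rightarrow> spart \<Rightarrow> bool" where
  "refines I J \<longleftrightarrow> (\<forall>B\<in>J. \<exists>S\<subseteq>I. B = \<Union>S)"

definition perm_part :: "nat \<Rightarrow> (nat \<Rightarrow> nat) \<Rightarrow> spart" where
  "perm_part n \<sigma> = {{i, n + \<sigma> i} | i. i \<in> {1..n}}"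

definition one_part :: "nat \<Rightarrow> spart" where
  "one_part n = perm_part n id"

definition sym_part :: "nat \<Rightarrow> spart set" where
  "sym_part n = {P \<in> cpart n. \<forall>B\<in>P. \<exists>i\<in>{1..n}. \<exists>j\<in>{1..n}. B = {i, n + j}}"

definition swp :: "nat \<Rightarrow> nat \<Rightarrow> nat" where
  "swp i j = (if j = i then i + 1 else if j = i + 1 then i else j)"

definition s_part :: "nat \<Rightarrow> nat \<Rightarrow> spart" where
  "s_part n i = perm_part n (swp i)"

definition is_interval :: "nat set \<Rightarrow> bool" where
  "is_interval C \<longleftrightarrow> (\<forall>a b c. a \<in> C \<longrightarrow> c \<in> C \<longrightarrow> a \<le> b \<longrightarrow> b \<le> c \<longrightarrow> b \<in> C)"

definition restr_top :: "nat \<Rightarrow> spart \<Rightarrow> spart" where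
  "restr_top n J = (\<lambda>B. B \<inter> {1..n}) ` J - {{}}"

definition boxed :: "nat \<Rightarrow> spart \<Rightarrow> bool" where
  "boxed n J \<longleftrightarrow> J \<in> cpart n \<and> refines (one_part n) J \<and> (\<forall>C\<in>restr_top n J. is_interval C)"

definition BR :: "nat \<Rightarrow> spart set \<Rightarrow> (spart \<times> spart) set" where
  "BR n M = {(I, J). I \<in> M \<and> boxed n J \<and> refines I J}"

definition br_mult :: "nat \<Rightarrow> spart \<times> spart \<Rightarrow> spart \<times> spart \<Rightarrow> spart \<times> spart" where
  "br_mult n p q = (concat n (fst p) (fst q), concat n (snd p) (snd q))"

definition b_part :: "nat \<Rightarrow> nat \<Rightarrow> spart" where
  "b_part n i = (one_part n - {{i, n + i}, {i + 1, n + i + 1}}) \<union> {{i, i + 1, n + i, n + i + 1}}"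

definition e_gen :: "nat \<Rightarrow> nat \<Rightarrow> spart \<times> spart" where
  "e_gen n i = (one_part n, b_part n i)"

definition z_gen :: "nat \<Rightarrow> nat \<Rightarrow> spart \<times> spart" where
  "z_gen n i = (s_part n i, b_part n i)"

inductive_set br_generated :: "nat \<Rightarrow> (spart \<times> spart) set \<Rightarrow> (spart \<times> spart) set"
  for n G where
  unit: "(one_part n, one_part n) \<in> br_generated n G"
| gen: "g \<in> G \<Longrightarrow> g \<in> br_generated n G"
| mult: "x \<in> br_generated n G \<Longrightarrow> y \<in> br_generated n G \<Longrightarrow> br_mult n x y \<in> br_generated n G"

end

theory Submission
  imports Defs
begin

(* An element (I, J) of BR(S_n) is determined by a permutation sigma, I having the blocks
   {i, n + sigma i}, and by the set L of links i ~ i + 1 present in J: a boxed partition is the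
   partition B_L whose top blocks are the maximal L-intervals, each top point i sharing its block
   with the bottom point n + i.  The condition I <= J says that sigma maps every i into its own
   L-interval.  Concatenation composes the permutations and unites the link sets, and
   e_i = (1, B_{i}), z_i = (s_i, B_{i}); hence every product of generators has this form.
   Conversely, (1, B_L) is the product of the e_i with i in L, and by bubble sort a permutation
   preserving the L-intervals is a product of adjacent transpositions s_j with j in L, so that
   multiplying (1, B_L) by the corresponding z_j adds no new links. *)

definition rel_on :: "'a set \<Rightarrow> ('a \<Rightarrow> 'a \<Rightarrow> bool) \<Rightarrow> ('a \<times> 'a) set" where
  "rel_on A r = {(x, y) \<in> A \<times> A. r x y}"

lemma equiv_rel_on:
  assumes "equivp r" shows "equiv A (rel_on A r)"
proof (rule equivI)
  show "refl_on A (rel_on A r)" using equivp_reflp[OF assms] by (auto simp: refl_on_def rel_on_def)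
  show "sym (rel_on A r)" using equivp_symp[OF assms] by (auto simp: sym_def rel_on_def)
  show "trans (rel_on A r)" using equivp_transp[OF assms] by (auto simp: trans_def rel_on_def)
qed (auto simp: rel_on_def)

lemma partition_on_quotient_rel_on: "equivp r \<Longrightarrow> partition_on A (A // rel_on A r)"
  by (rule partition_on_quotient[OF equiv_rel_on])

lemma samebl_quotient_rel_on:
  assumes "equivp r"
  shows "samebl (A // rel_on A r) x y \<longleftrightarrow> x \<in> A \<and> y \<in> A \<and> r x y"
proof
  assume "samebl (A // rel_on A r) x y"
  then obtain X where "X \<in> A // rel_on A r" "{x, y} \<subseteq> X"
    unfolding samebl_def by blast
  then have "(x, y) \<in> rel_on A r"
    by (rule in_quotient_imp_in_rel[OF equiv_rel_on[OF assms]])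
  then show "x \<in> A \<and> y \<in> A \<and> r x y"
    by (simp add: rel_on_def)
next
  assume xy: "x \<in> A \<and> y \<in> A \<and> r x y"
  then have "x \<in> rel_on A r `` {x}" "y \<in> rel_on A r `` {x}"
    using equivp_reflp[OF assms] by (auto simp: rel_on_def)
  moreover have "rel_on A r `` {x} \<in> A // rel_on A r"
    using xy by (intro quotientI) simp
  ultimately show "samebl (A // rel_on A r) x y"
    unfolding samebl_def by blast
qed

lemma partition_on_eq_quotient_rel_onI:
  assumes P: "partition_on A P"
    and r: "\<And>x y. x \<in> A \<Longrightarrow> y \<in> A \<Longrightarrow> samebl P x y \<longleftrightarrow> r x y"
  shows "P = A // rel_on A r"
proof -
  have "(\<exists>p\<in>P. x \<in> p \<and> y \<in> p) \<longleftrightarrow> x \<in> A \<and> y \<in> A \<and> r x y" for x y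
    using r[of x y] partition_onD1[OF P] unfolding samebl_def by auto
  then have "{(x, y). \<exists>p\<in>P. x \<in> p \<and> y \<in> p} = rel_on A r"
    unfolding rel_on_def by auto
  then show ?thesis
    using partition_on_eq_quotient[OF P] by simp
qed

lemma samebl_sym: "samebl P x y \<Longrightarrow> samebl P y x"
  unfolding samebl_def by blast

lemma samebl_refl: "partition_on A P \<Longrightarrow> x \<in> A \<Longrightarrow> samebl P x x"
  unfolding samebl_def by (auto dest: partition_onD1)

lemma samebl_subset: "partition_on A P \<Longrightarrow> samebl P x y \<Longrightarrow> x \<in> A \<and> y \<in> A"
  unfolding samebl_def by (auto dest: partition_onD1)

lemma partition_on_block_unique:
  "partition_on A P \<Longrightarrow> B \<in> P \<Longrightarrow> C \<in> P \<Longrightarrow> x \<in> B \<Longrightarrow> x \<in> C \<Longrightarrow> B = C"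
  using disjointD[OF partition_onD2] by blast

lemma samebl_in_block:
  assumes P: "partition_on A P" and "B \<in> P" "x \<in> B" "samebl P x y"
  shows "y \<in> B"
proof -
  obtain C where "C \<in> P" "x \<in> C" "y \<in> C" using assms(4) unfolding samebl_def by blast
  then show ?thesis using partition_on_block_unique[OF P \<open>B \<in> P\<close>] assms(3) by blast
qed

lemma samebl_trans: "partition_on A P \<Longrightarrow> samebl P x y \<Longrightarrow> samebl P y z \<Longrightarrow> samebl P x z"
  by (meson samebl_def samebl_in_block)

lemma refines_iff_subset_block:
  fixes P Q :: spart
  assumes P: "partition_on A P" and Q: "partition_on A Q"
  shows "refines P Q \<longleftrightarrow> (\<forall>B\<in>P. \<exists>C\<in>Q. B \<subseteq> C)"
proof
  assume ref: "refines P Q"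
  show "\<forall>B\<in>P. \<exists>C\<in>Q. B \<subseteq> C"
  proof
    fix B assume B: "B \<in> P"
    then obtain x where x: "x \<in> B" using partition_onD3[OF P] by fastforce
    then have "x \<in> \<Union>P" using B by blast
    then have "x \<in> \<Union>Q" using partition_onD1[OF P] partition_onD1[OF Q] by simp
    then obtain C where C: "C \<in> Q" "x \<in> C" by blast
    then obtain S where S: "S \<subseteq> P" "C = \<Union>S" using ref unfolding refines_def by meson
    obtain B' where B': "B' \<in> S" "x \<in> B'" using C(2) unfolding S(2) by blast
    then have "B' = B" using partition_on_block_unique[OF P] S(1) B x by blast
    then have "B \<subseteq> C" unfolding S(2) using B'(1) by blast
    then show "\<exists>C\<in>Q. B \<subseteq> C" using C(1) by blast
  qed
next
  assume "\<forall>B\<in>P. \<exists>C\<in>Q. B \<subseteq> C"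
  then have ref: "Disjoint_Sets.refines A P Q" using P Q by (simp add: Disjoint_Sets.refines_def)
  show "refines P Q"
    unfolding refines_def
  proof
    fix C assume "C \<in> Q"
    then have "partition_on C {B \<in> P. B \<subseteq> C}" by (rule refines_obtains_subset[OF ref])
    then have "C = \<Union>{B \<in> P. B \<subseteq> C}" by (rule partition_onD1)
    moreover have "{B \<in> P. B \<subseteq> C} \<subseteq> P" by (rule Collect_restrict)
    ultimately show "\<exists>S\<subseteq>P. C = \<Union>S" by (intro exI conjI)
  qed
qed

lemma refines_iff_samebl_on_blocks:
  fixes P Q :: spart
  assumes P: "partition_on A P" and Q: "partition_on A Q"
  shows "refines P Q \<longleftrightarrow> (\<forall>B\<in>P. \<forall>x\<in>B. \<forall>y\<in>B. samebl Q x y)"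
  unfolding refines_iff_subset_block[OF P Q]
proof (intro iffI ballI)
  fix B x y assume "\<forall>B\<in>P. \<exists>C\<in>Q. B \<subseteq> C" "B \<in> P" and xy: "x \<in> B" "y \<in> B"
  then obtain C where "C \<in> Q" "B \<subseteq> C" by blast
  then show "samebl Q x y" using xy unfolding samebl_def by blast
next
  fix B assume samebl: "\<forall>B\<in>P. \<forall>x\<in>B. \<forall>y\<in>B. samebl Q x y" and B: "B \<in> P"
  then obtain x where x: "x \<in> B" using partition_onD3[OF P] by fastforce
  then obtain C where C: "C \<in> Q" "x \<in> C" using samebl B unfolding samebl_def by blast
  have "B \<subseteq> C" using samebl_in_block[OF Q C] samebl B x by blast
  then show "\<exists>C\<in>Q. B \<subseteq> C" using C(1) by blast
qed

lemma partition_on_merge_blocks: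
  assumes P: "partition_on A P" and B: "B \<in> P" "B' \<in> P"
  shows "partition_on A (P - {B, B'} \<union> {B \<union> B'})"
proof (rule partition_onI)
  show "\<Union>(P - {B, B'} \<union> {B \<union> B'}) = A" using B partition_onD1[OF P] by blast
  show "{} \<notin> P - {B, B'} \<union> {B \<union> B'}" using B partition_onD3[OF P] by auto
  have disj: "disjnt C D" if "C \<in> P" "D \<in> P" "C \<noteq> D" for C D
    using disjointD[OF partition_onD2[OF P] that] by (simp add: disjnt_def)
  show "disjnt C D"
    if CD: "C \<in> P - {B, B'} \<union> {B \<union> B'}" "D \<in> P - {B, B'} \<union> {B \<union> B'}" "C \<noteq> D" for C D
  proof -
    consider "C \<in> P - {B, B'}" "D \<in> P - {B, B'}" | "C = B \<union> B'" "D \<in> P - {B, B'}"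
      | "C \<in> P - {B, B'}" "D = B \<union> B'"
      using CD by blast
    then show ?thesis
    proof cases
      case 1 then show ?thesis using disj CD(3) by blast
    next
      case 2 then show ?thesis using disj[of B D] disj[of B' D] B by (auto simp: disjnt_Un1)
    next
      case 3 then show ?thesis using disj[of C B] disj[of C B'] B by (auto simp: disjnt_Un2)
    qed
  qed
qed

lemma samebl_merge_blocks:
  "samebl (P - {B, B'} \<union> {B \<union> B'}) x y \<longleftrightarrow> samebl P x y \<or> (x \<in> B \<union> B' \<and> y \<in> B \<union> B')"
proof -
  have "samebl (P - {B, B'} \<union> {B \<union> B'}) x y \<longleftrightarrow>
      (\<exists>C\<in>P - {B, B'}. x \<in> C \<and> y \<in> C) \<or> (x \<in> B \<union> B' \<and> y \<in> B \<union> B')"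
    unfolding samebl_def by (simp add: disj_commute)
  also have "\<dots> \<longleftrightarrow> samebl P x y \<or> (x \<in> B \<union> B' \<and> y \<in> B \<union> B')"
    unfolding samebl_def by auto
  finally show ?thesis .
qed

section \<open>Intervals of links\<close>

definition linked :: "nat set \<Rightarrow> nat \<Rightarrow> nat \<Rightarrow> bool" where
  "linked L a b \<longleftrightarrow> (\<forall>i. min a b \<le> i \<and> i < max a b \<longrightarrow> i \<in> L)"

lemma linked_refl [simp]: "linked L a a"
  by (auto simp: linked_def)

lemma linked_commute: "linked L a b \<longleftrightarrow> linked L b a"
  by (simp add: linked_def min.commute max.commute)

lemma linked_trans:
  assumes "linked L a b" "linked L b c" shows "linked L a c"
  unfolding linked_def
proof (intro allI impI)
  fix i assume "min a c \<le> i \<and> i < max a c"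
  then have "(min a b \<le> i \<and> i < max a b) \<or> (min b c \<le> i \<and> i < max b c)" by auto
  then show "i \<in> L" using assms unfolding linked_def by blast
qed

lemma equivp_linked: "equivp (linked L)"
  by (intro equivpI reflpI sympI transpI) (auto simp: linked_commute intro: linked_trans)

lemma linked_mono: "linked L a b \<Longrightarrow> L \<subseteq> M \<Longrightarrow> linked M a b"
  by (auto simp: linked_def)

lemma linked_empty [simp]: "linked {} a b \<longleftrightarrow> a = b"
  by (auto simp: linked_def)

lemma linked_Suc: "i \<in> L \<Longrightarrow> linked L i (Suc i)"
  by (auto simp: linked_def le_less_Suc_eq)

lemma linked_between:
  assumes "linked L p a" "linked L p c" "a \<le> b" "b \<le> c" shows "linked L p b"
  unfolding linked_def
proof (intro allI impI)
  fix i assume "min p b \<le> i \<and> i < max p b"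
  then have "(min p a \<le> i \<and> i < max p a) \<or> (min p c \<le> i \<and> i < max p c)" using assms(3,4) by auto
  then show "i \<in> L" using assms(1,2) unfolding linked_def by blast
qed

lemma linked_singleton_le:
  assumes "a \<le> b" shows "linked {i} a b \<longleftrightarrow> a = b \<or> (a = i \<and> b = Suc i)"
proof
  assume "linked {i} a b"
  then have l: "j = i" if "a \<le> j" "j < b" for j
    using that assms by (auto simp: linked_def min_def max_def)
  show "a = b \<or> (a = i \<and> b = Suc i)"
  proof (cases "a = b")
    case False
    then have "a = i" using l assms by simp
    moreover have "\<not> Suc a < b" using l[of "Suc a"] \<open>a = i\<close> by auto
    ultimately show ?thesis using False assms by auto
  qed simp
qed (auto simp: linked_def le_less_Suc_eq)

lemma linked_singleton: "linked {i} a b \<longleftrightarrow> a = b \<or> {a, b} = {i, Suc i}"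
proof (cases "a \<le> b")
  case True
  then show ?thesis by (auto simp: linked_singleton_le doubleton_eq_iff)
next
  case False
  then show ?thesis
    using linked_singleton_le[of b a i] by (auto simp: linked_commute[of _ a] doubleton_eq_iff)
qed

lemma linked_imp_rel_le:
  assumes "transp E" "E a a" "a \<le> b" "linked L a b"
    and "\<And>i. i \<in> L \<Longrightarrow> a \<le> i \<Longrightarrow> i < b \<Longrightarrow> E i (Suc i)"
  shows "E a b"
  using assms(3-5)
proof (induction b)
  case 0
  then show ?case using assms(2) by simp
next
  case (Suc b)
  show ?case
  proof (cases "a = Suc b")
    case False
    then have ab: "a \<le> b" using Suc.prems(1) by simp
    have "linked L a b" using linked_between[OF linked_refl Suc.prems(2) ab] by simp
    then have ab_rel: "E a b" using Suc.IH ab Suc.prems(3) by simp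
    have "b \<in> L" using Suc.prems(2) ab by (auto simp: linked_def)
    then have "E b (Suc b)" using Suc.prems(3) ab by simp
    with ab_rel show ?thesis using transpD[OF assms(1)] by blast
  qed (use assms(2) in simp)
qed

lemma linked_imp_rel:
  assumes "symp E" "transp E" "E a a" "E b b" "linked L a b"
    and "\<And>i. i \<in> L \<Longrightarrow> min a b \<le> i \<Longrightarrow> i < max a b \<Longrightarrow> E i (Suc i)"
  shows "E a b"
proof (cases "a \<le> b")
  case True
  then show ?thesis using linked_imp_rel_le[OF assms(2,3) True assms(5)] assms(6) by simp
next
  case False
  then have "E b a"
    using linked_imp_rel_le[OF assms(2,4), of a L] assms(5,6) by (simp add: linked_commute)
  then show ?thesis using sympD[OF assms(1)] by blast
qed

lemma perm_part_eq_image: "perm_part n \<sigma> = (\<lambda>i. {i, n + \<sigma> i}) ` {1..n}"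
  unfolding perm_part_def by blast

(* The column of the bottom point in the block of x of perm_part n sigma. *)
definition strand_end :: "nat \<Rightarrow> (nat \<Rightarrow> nat) \<Rightarrow> nat \<Rightarrow> nat" where
  "strand_end n \<sigma> x = (if x \<le> n then \<sigma> x else x - n)"

lemma Union_perm_part:
  assumes \<sigma>: "bij_betw \<sigma> {1..n} {1..n}"
  shows "\<Union>(perm_part n \<sigma>) = {1..2*n}"
proof
  have im: "\<sigma> ` {1..n} = {1..n}" using \<sigma> by (simp add: bij_betw_def)
  show "\<Union>(perm_part n \<sigma>) \<subseteq> {1..2*n}"
  proof
    fix x assume "x \<in> \<Union>(perm_part n \<sigma>)"
    then obtain i where "i \<in> {1..n}" "x \<in> {i, n + \<sigma> i}" by (auto simp: perm_part_eq_image)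
    moreover have "\<sigma> i \<in> {1..n}" using calculation(1) im by blast
    ultimately show "x \<in> {1..2*n}" by auto
  qed
  show "{1..2*n} \<subseteq> \<Union>(perm_part n \<sigma>)"
  proof
    fix x assume x: "x \<in> {1..2*n}"
    show "x \<in> \<Union>(perm_part n \<sigma>)"
    proof (cases "x \<le> n")
      case True
      then show ?thesis using x by (auto simp: perm_part_eq_image)
    next
      case False
      then have "x - n \<in> \<sigma> ` {1..n}" using x im by auto
      then obtain i where "i \<in> {1..n}" "x - n = \<sigma> i" by (rule imageE)
      moreover have "x = n + \<sigma> i" using False calculation(2) by simp
      ultimately show ?thesis by (auto simp: perm_part_eq_image)
    qed
  qed
qed

lemma partition_on_perm_part:
  assumes \<sigma>: "bij_betw \<sigma> {1..n} {1..n}"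
  shows "partition_on {1..2*n} (perm_part n \<sigma>)"
proof (rule partition_onI)
  have im: "\<sigma> ` {1..n} = {1..n}" and inj: "inj_on \<sigma> {1..n}"
    using \<sigma> by (auto simp: bij_betw_def)
  show "\<Union>(perm_part n \<sigma>) = {1..2*n}" by (rule Union_perm_part[OF \<sigma>])
  show "{} \<notin> perm_part n \<sigma>" by (auto simp: perm_part_eq_image)
  show "disjnt B C" if BC: "B \<in> perm_part n \<sigma>" "C \<in> perm_part n \<sigma>" "B \<noteq> C" for B C
  proof -
    obtain i j where ij: "i \<in> {1..n}" "j \<in> {1..n}" "B = {i, n + \<sigma> i}" "C = {j, n + \<sigma> j}"
      using BC(1,2) by (auto simp: perm_part_eq_image)
    then have "i \<noteq> j" using BC(3) by blast
    then have "\<sigma> i \<noteq> \<sigma> j" using inj ij(1,2) by (auto dest: inj_onD)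
    moreover have "\<sigma> i \<in> {1..n}" "\<sigma> j \<in> {1..n}" using ij(1,2) im by blast+
    ultimately show ?thesis using ij \<open>i \<noteq> j\<close> by (auto simp: disjnt_def)
  qed
qed

lemma mem_perm_part_block_iff:
  assumes \<sigma>: "bij_betw \<sigma> {1..n} {1..n}" and i: "i \<in> {1..n}"
  shows "z \<in> {i, n + \<sigma> i} \<longleftrightarrow> z \<in> {1..2*n} \<and> strand_end n \<sigma> z = \<sigma> i"
proof
  have "\<sigma> i \<in> {1..n}" using bij_betwE[OF \<sigma>] i by blast
  then show "z \<in> {1..2*n} \<and> strand_end n \<sigma> z = \<sigma> i" if "z \<in> {i, n + \<sigma> i}"
    using that i by (auto simp: strand_end_def)
  show "z \<in> {i, n + \<sigma> i}" if z: "z \<in> {1..2*n} \<and> strand_end n \<sigma> z = \<sigma> i"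
  proof (cases "z \<le> n")
    case True
    then have "\<sigma> z = \<sigma> i" "z \<in> {1..n}" using z by (auto simp: strand_end_def)
    then show ?thesis using \<sigma> i by (auto simp: bij_betw_def dest: inj_onD)
  qed (use z in \<open>auto simp: strand_end_def\<close>)
qed

lemma samebl_perm_part_iff:
  assumes \<sigma>: "bij_betw \<sigma> {1..n} {1..n}"
  shows "samebl (perm_part n \<sigma>) x y \<longleftrightarrow>
    x \<in> {1..2*n} \<and> y \<in> {1..2*n} \<and> strand_end n \<sigma> x = strand_end n \<sigma> y"
proof -
  note block = mem_perm_part_block_iff[OF \<sigma>]
  have "samebl (perm_part n \<sigma>) x y \<longleftrightarrow> (\<exists>i\<in>{1..n}. x \<in> {i, n + \<sigma> i} \<and> y \<in> {i, n + \<sigma> i})"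
    unfolding samebl_def perm_part_eq_image by simp
  also have "\<dots> \<longleftrightarrow> x \<in> {1..2*n} \<and> y \<in> {1..2*n} \<and> strand_end n \<sigma> x = strand_end n \<sigma> y"
  proof
    assume xy: "x \<in> {1..2*n} \<and> y \<in> {1..2*n} \<and> strand_end n \<sigma> x = strand_end n \<sigma> y"
    then have "x \<in> \<Union>(perm_part n \<sigma>)" using Union_perm_part[OF \<sigma>] by (simp only:)
    then obtain i where i: "i \<in> {1..n}" "x \<in> {i, n + \<sigma> i}" by (auto simp: perm_part_eq_image)
    then have "y \<in> {i, n + \<sigma> i}" using block[OF i(1), of x] block[OF i(1), of y] xy by simp
    then show "\<exists>i\<in>{1..n}. x \<in> {i, n + \<sigma> i} \<and> y \<in> {i, n + \<sigma> i}" using i by blast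
  next
    assume "\<exists>i\<in>{1..n}. x \<in> {i, n + \<sigma> i} \<and> y \<in> {i, n + \<sigma> i}"
    then obtain i where "i \<in> {1..n}" "x \<in> {i, n + \<sigma> i}" "y \<in> {i, n + \<sigma> i}" by blast
    then show "x \<in> {1..2*n} \<and> y \<in> {1..2*n} \<and> strand_end n \<sigma> x = strand_end n \<sigma> y"
      using block[of i x] block[of i y] by simp
  qed
  finally show ?thesis .
qed

lemma perm_part_cong: "(\<And>i. i \<in> {1..n} \<Longrightarrow> \<sigma> i = \<tau> i) \<Longrightarrow> perm_part n \<sigma> = perm_part n \<tau>"
  unfolding perm_part_eq_image by (rule image_cong) simp_all

lemma perm_part_in_sym_part:
  assumes \<sigma>: "bij_betw \<sigma> {1..n} {1..n}" shows "perm_part n \<sigma> \<in> sym_part n"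
proof -
  have "\<forall>B\<in>perm_part n \<sigma>. \<exists>i\<in>{1..n}. \<exists>j\<in>{1..n}. B = {i, n + j}"
    using bij_betwE[OF \<sigma>] unfolding perm_part_eq_image by blast
  then show ?thesis
    using partition_on_perm_part[OF \<sigma>] unfolding sym_part_def cpart_def by blast
qed

lemma sym_part_imp_perm_part:
  assumes "P \<in> sym_part n"
  obtains \<sigma> where "bij_betw \<sigma> {1..n} {1..n}" "P = perm_part n \<sigma>"
proof -
  have P: "partition_on {1..2*n} P" using assms by (simp add: sym_part_def cpart_def)
  have blocks: "\<exists>i\<in>{1..n}. \<exists>j\<in>{1..n}. B = {i, n + j}" if "B \<in> P" for B
    using assms that by (simp add: sym_part_def)
  have "\<exists>j. j \<in> {1..n} \<and> {i, n + j} \<in> P" if i: "i \<in> {1..n}" for i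
  proof -
    have "i \<in> \<Union>P" using i partition_onD1[OF P] by auto
    then obtain B where B: "B \<in> P" "i \<in> B" by blast
    then obtain a j where "a \<in> {1..n}" "j \<in> {1..n}" "B = {a, n + j}" using blocks by blast
    moreover then have "a = i" using B(2) i by auto
    ultimately show ?thesis using B(1) by blast
  qed
  then obtain \<sigma> where \<sigma>: "\<And>i. i \<in> {1..n} \<Longrightarrow> \<sigma> i \<in> {1..n} \<and> {i, n + \<sigma> i} \<in> P"
    by metis
  have "P = perm_part n \<sigma>"
  proof
    show "P \<subseteq> perm_part n \<sigma>"
    proof
      fix B assume B: "B \<in> P"
      then obtain i j where ij: "i \<in> {1..n}" "j \<in> {1..n}" "B = {i, n + j}" using blocks by blast
      then have "B = {i, n + \<sigma> i}"
        using partition_on_block_unique[OF P B, of "{i, n + \<sigma> i}" i] \<sigma>[OF ij(1)] by simp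
      then show "B \<in> perm_part n \<sigma>" using ij(1) by (simp add: perm_part_eq_image)
    qed
    show "perm_part n \<sigma> \<subseteq> P" using \<sigma> by (auto simp: perm_part_eq_image)
  qed
  moreover have "inj_on \<sigma> {1..n}"
  proof (rule inj_onI)
    fix i i' assume i: "i \<in> {1..n}" "i' \<in> {1..n}" "\<sigma> i = \<sigma> i'"
    have "{i, n + \<sigma> i} = {i', n + \<sigma> i'}"
      using partition_on_block_unique[OF P, of "{i, n + \<sigma> i}" "{i', n + \<sigma> i'}" "n + \<sigma> i"]
        \<sigma>[OF i(1)] \<sigma>[OF i(2)] i(3) by simp
    then show "i = i'" using i by (auto simp: doubleton_eq_iff)
  qed
  moreover then have "\<sigma> ` {1..n} = {1..n}" using \<sigma> by (intro endo_inj_surj) auto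
  ultimately show ?thesis using that by (simp add: bij_betw_def)
qed

section \<open>Boxed partitions\<close>

definition column :: "nat \<Rightarrow> nat \<Rightarrow> nat" where
  "column n x = (if x \<le> n then x else x - n)"

definition boxed_part :: "nat \<Rightarrow> nat set \<Rightarrow> spart" where
  "boxed_part n L = {1..2*n} // rel_on {1..2*n} (\<lambda>x y. linked L (column n x) (column n y))"

lemma equivp_linked_column: "equivp (\<lambda>x y. linked L (column n x) (column n y))"
  using equivp_vimage2p[OF equivp_linked, of "column n" L] by (simp add: vimage2p_def)

lemma partition_on_boxed_part: "partition_on {1..2*n} (boxed_part n L)"
  unfolding boxed_part_def by (rule partition_on_quotient_rel_on[OF equivp_linked_column])

lemma samebl_boxed_part_iff:
  "samebl (boxed_part n L) x y \<longleftrightarrow>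
    x \<in> {1..2*n} \<and> y \<in> {1..2*n} \<and> linked L (column n x) (column n y)"
  unfolding boxed_part_def by (rule samebl_quotient_rel_on[OF equivp_linked_column])

lemma column_in_range: "x \<in> {1..2*n} \<Longrightarrow> column n x \<in> {1..n}"
  by (auto simp: column_def)

lemma strand_end_id: "strand_end n id = column n"
  by (auto simp: strand_end_def column_def)

lemma partition_on_one_part: "partition_on {1..2*n} (one_part n)"
  unfolding one_part_def by (rule partition_on_perm_part[OF bij_betw_id])

lemma one_part_eq_boxed_part: "one_part n = boxed_part n {}"
  unfolding one_part_def boxed_part_def
  using partition_on_perm_part[OF bij_betw_id]
  by (rule partition_on_eq_quotient_rel_onI) (simp add: samebl_perm_part_iff[OF bij_betw_id] strand_end_id)

lemma boxed_boxed_part: "boxed n (boxed_part n L)"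
  unfolding boxed_def
proof (intro conjI ballI)
  show "boxed_part n L \<in> cpart n" using partition_on_boxed_part by (simp add: cpart_def)
  have "\<forall>B\<in>one_part n. \<forall>x\<in>B. \<forall>y\<in>B. samebl (boxed_part n L) x y"
    by (auto simp: one_part_def perm_part_eq_image samebl_boxed_part_iff column_def)
  then show "refines (one_part n) (boxed_part n L)"
    by (simp add: refines_iff_samebl_on_blocks[OF partition_on_one_part partition_on_boxed_part])
next
  fix C assume "C \<in> restr_top n (boxed_part n L)"
  then obtain B where B: "B \<in> boxed_part n L" "C = B \<inter> {1..n}" by (auto simp: restr_top_def)
  show "is_interval C"
    unfolding is_interval_def
  proof (intro allI impI)
    fix a b c assume abc: "a \<in> C" "c \<in> C" "a \<le> b" "b \<le> c"
    then have "samebl (boxed_part n L) a c" using B unfolding samebl_def by blast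
    then have "linked L a c" using abc B(2) by (simp add: samebl_boxed_part_iff column_def)
    then have "linked L a b" using linked_between[OF linked_refl _ abc(3,4)] by blast
    then have "samebl (boxed_part n L) a b" using abc B(2) by (auto simp: samebl_boxed_part_iff column_def)
    then show "b \<in> C" using samebl_in_block[OF partition_on_boxed_part B(1)] abc B(2) by auto
  qed
qed

lemma boxed_samebl_column:
  assumes J: "boxed n J" and x: "x \<in> {1..2*n}"
  shows "samebl J x (column n x)"
proof -
  have P: "partition_on {1..2*n} J" and ref: "refines (one_part n) J"
    using J by (simp_all add: boxed_def cpart_def)
  have "\<forall>B\<in>one_part n. \<forall>y\<in>B. \<forall>z\<in>B. samebl J y z"
    using ref unfolding refines_iff_samebl_on_blocks[OF partition_on_one_part P] .
  moreover have "{column n x, n + column n x} \<in> one_part n"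
    using column_in_range[OF x] unfolding one_part_def perm_part_eq_image
    by (intro image_eqI[where x = "column n x"]) simp_all
  ultimately have "\<forall>y\<in>{column n x, n + column n x}. \<forall>z\<in>{column n x, n + column n x}. samebl J y z"
    by (rule bspec)
  moreover have "x \<in> {column n x, n + column n x}" using x by (simp add: column_def)
  ultimately show ?thesis by (meson insertI1)
qed

lemma boxed_samebl_between:
  assumes J: "boxed n J" and ac: "samebl J a c" and b: "a \<le> b" "b \<le> c" and c: "c \<le> n"
  shows "samebl J a b"
proof -
  have P: "partition_on {1..2*n} J" using J by (simp add: boxed_def cpart_def)
  obtain B where B: "B \<in> J" "a \<in> B" "c \<in> B" using ac unfolding samebl_def by blast
  have "a \<in> {1..n}" "c \<in> {1..n}" using samebl_subset[OF P ac] b c by auto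
  then have top: "a \<in> B \<inter> {1..n}" "c \<in> B \<inter> {1..n}" using B by auto
  then have "B \<inter> {1..n} \<noteq> {}" by blast
  then have "B \<inter> {1..n} \<in> restr_top n J"
    unfolding restr_top_def using B(1) by (intro DiffI imageI) auto
  then have "is_interval (B \<inter> {1..n})" using J by (simp add: boxed_def)
  then have "b \<in> B \<inter> {1..n}" using top b unfolding is_interval_def by (elim allE impE)
  then show ?thesis using B unfolding samebl_def by blast
qed

lemma boxed_samebl_top_iff:
  assumes J: "boxed n J" and ab: "a \<in> {1..n}" "b \<in> {1..n}"
  shows "samebl J a b \<longleftrightarrow> linked {i \<in> {1..n-1}. samebl J i (Suc i)} a b"
proof
  have P: "partition_on {1..2*n} J" using J by (simp add: boxed_def cpart_def)
  assume "samebl J a b"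
  then have minmax: "samebl J (min a b) (max a b)" by (simp add: min_def max_def samebl_sym)
  show "linked {i \<in> {1..n-1}. samebl J i (Suc i)} a b"
    unfolding linked_def
  proof (intro allI impI)
    fix i assume i: "min a b \<le> i \<and> i < max a b"
    then have "samebl J (min a b) i" "samebl J (min a b) (Suc i)"
      using boxed_samebl_between[OF J minmax] ab by auto
    then have "samebl J i (Suc i)" using samebl_trans[OF P] samebl_sym by blast
    then show "i \<in> {i \<in> {1..n-1}. samebl J i (Suc i)}" using i ab by auto
  qed
next
  have P: "partition_on {1..2*n} J" using J by (simp add: boxed_def cpart_def)
  assume l: "linked {i \<in> {1..n-1}. samebl J i (Suc i)} a b"
  show "samebl J a b"
  proof (rule linked_imp_rel[where E = "samebl J"])
    show "symp (samebl J)" by (rule sympI) (rule samebl_sym)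
    show "transp (samebl J)" by (rule transpI) (rule samebl_trans[OF P])
    show "samebl J a a" "samebl J b b" using ab by (auto intro: samebl_refl[OF P])
    show "linked {i \<in> {1..n-1}. samebl J i (Suc i)} a b" by (rule l)
  qed simp
qed

lemma boxed_eq_boxed_part:
  assumes J: "boxed n J"
  shows "J = boxed_part n {i \<in> {1..n-1}. samebl J i (Suc i)}"
  unfolding boxed_part_def
proof (rule partition_on_eq_quotient_rel_onI)
  show P: "partition_on {1..2*n} J" using J by (simp add: boxed_def cpart_def)
  fix x y assume xy: "x \<in> {1..2*n}" "y \<in> {1..2*n}"
  have "samebl J x y \<longleftrightarrow> samebl J (column n x) (column n y)"
    using boxed_samebl_column[OF J xy(1)] boxed_samebl_column[OF J xy(2)] samebl_trans[OF P] samebl_sym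
    by meson
  also have "\<dots> \<longleftrightarrow> linked {i \<in> {1..n-1}. samebl J i (Suc i)} (column n x) (column n y)"
    using boxed_samebl_top_iff[OF J] column_in_range xy by blast
  finally show "samebl J x y \<longleftrightarrow> linked {i \<in> {1..n-1}. samebl J i (Suc i)} (column n x) (column n y)" .
qed

lemma b_part_eq_boxed_part:
  assumes i: "i \<in> {1..n-1}"
  shows "b_part n i = boxed_part n {i}"
proof -
  let ?B = "{i, n + i}" and ?B' = "{Suc i, n + Suc i}"
  have blocks: "?B \<in> one_part n" "?B' \<in> one_part n"
    using i unfolding one_part_def perm_part_eq_image by (auto intro: image_eqI)
  have "b_part n i = one_part n - {?B, ?B'} \<union> {?B \<union> ?B'}"
    unfolding b_part_def by (simp add: insert_commute)
  also have "\<dots> = boxed_part n {i}"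
    unfolding boxed_part_def
  proof (rule partition_on_eq_quotient_rel_onI)
    show "partition_on {1..2*n} (one_part n - {?B, ?B'} \<union> {?B \<union> ?B'})"
      by (rule partition_on_merge_blocks[OF partition_on_one_part blocks])
    fix x y assume xy: "x \<in> {1..2*n}" "y \<in> {1..2*n}"
    have merged: "z \<in> ?B \<union> ?B' \<longleftrightarrow> column n z \<in> {i, Suc i}" if "z \<in> {1..2*n}" for z
      using that i by (auto simp: column_def)
    have "samebl (one_part n - {?B, ?B'} \<union> {?B \<union> ?B'}) x y \<longleftrightarrow>
        column n x = column n y \<or> (column n x \<in> {i, Suc i} \<and> column n y \<in> {i, Suc i})"
      unfolding samebl_merge_blocks one_part_def samebl_perm_part_iff[OF bij_betw_id] strand_end_id
      using xy merged by simp
    also have "\<dots> \<longleftrightarrow> linked {i} (column n x) (column n y)"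
      by (auto simp: linked_singleton doubleton_eq_iff)
    finally show "samebl (one_part n - {?B, ?B'} \<union> {?B \<union> ?B'}) x y \<longleftrightarrow> linked {i} (column n x) (column n y)" .
  qed
  finally show ?thesis .
qed

lemma refines_perm_part_boxed_part_iff:
  assumes \<sigma>: "bij_betw \<sigma> {1..n} {1..n}"
  shows "refines (perm_part n \<sigma>) (boxed_part n L) \<longleftrightarrow> (\<forall>i\<in>{1..n}. linked L i (\<sigma> i))"
proof -
  have linked: "samebl (boxed_part n L) i (n + \<sigma> i) \<longleftrightarrow> linked L i (\<sigma> i)" if i: "i \<in> {1..n}" for i
  proof -
    have "\<sigma> i \<in> {1..n}" using bij_betwE[OF \<sigma>] i by blast
    then show ?thesis using i by (auto simp: samebl_boxed_part_iff column_def)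
  qed
  moreover have "samebl (boxed_part n L) (n + \<sigma> i) i \<longleftrightarrow> linked L i (\<sigma> i)" if "i \<in> {1..n}" for i
    using linked[OF that] samebl_sym by blast
  moreover have "samebl (boxed_part n L) x x" if "x \<in> {1..2*n}" for x
    using that by (simp add: samebl_boxed_part_iff)
  moreover have "{i, n + \<sigma> i} \<subseteq> {1..2*n}" if i: "i \<in> {1..n}" for i
    using i bij_betwE[OF \<sigma>] by auto
  ultimately show ?thesis
    unfolding refines_iff_samebl_on_blocks[OF partition_on_perm_part[OF \<sigma>] partition_on_boxed_part]
    unfolding perm_part_eq_image by auto
qed

section \<open>Concatenation\<close>

definition concat_reach :: "nat \<Rightarrow> spart \<Rightarrow> spart \<Rightarrow> nat \<Rightarrow> nat \<Rightarrow> bool" where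
  "concat_reach n I J x y \<longleftrightarrow> (outpt n x, outpt n y) \<in> (concat_rel n I J)\<^sup>*"

lemma concat_relI1: "samebl I x y \<Longrightarrow> (x, y) \<in> concat_rel n I J"
  by (simp add: concat_rel_def)

lemma concat_relI2: "samebl J x y \<Longrightarrow> (x + n, y + n) \<in> concat_rel n I J"
  by (auto simp: concat_rel_def)

lemma equivp_concat_reach: "equivp (concat_reach n I J)"
proof (intro equivpI reflpI sympI transpI)
  have "sym (concat_rel n I J)" unfolding concat_rel_def sym_def by (auto dest: samebl_sym)
  then show "concat_reach n I J y x" if "concat_reach n I J x y" for x y
    using that sym_rtrancl unfolding concat_reach_def sym_def by blast
qed (auto simp: concat_reach_def)

lemma quotient_rel_on_eq_image: "A // rel_on A r = (\<lambda>x. {y \<in> A. r x y}) ` A"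
  unfolding quotient_def rel_on_def by auto

lemma concat_eq_quotient: "concat n I J = {1..2*n} // rel_on {1..2*n} (concat_reach n I J)"
  unfolding concat_def quotient_rel_on_eq_image concat_reach_def ..

lemma concat_reach_invariant:
  assumes E: "equivp E"
    and I: "\<And>x y. samebl I x y \<Longrightarrow> E x y" and J: "\<And>x y. samebl J x y \<Longrightarrow> E (x + n) (y + n)"
    and "concat_reach n I J x y"
  shows "E (outpt n x) (outpt n y)"
proof -
  have "(outpt n x, outpt n y) \<in> (concat_rel n I J)\<^sup>*" using assms(4) by (simp add: concat_reach_def)
  then show ?thesis
  proof (induction rule: rtrancl_induct)
    case base
    show ?case by (rule equivp_reflp[OF E])
  next
    case (step a b)
    from step.hyps(2) consider "samebl I a b" | x y where "a = x + n" "b = y + n" "samebl J x y"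
      unfolding concat_rel_def by blast
    then have "E a b" by cases (simp_all add: I J)
    then show ?case using step.IH equivp_transp[OF E] by blast
  qed
qed

lemma concat_reach_perm_part_strand_end:
  assumes \<sigma>: "bij_betw \<sigma> {1..n} {1..n}" and \<tau>: "bij_betw \<tau> {1..n} {1..n}"
    and "concat_reach n (perm_part n \<sigma>) (perm_part n \<tau>) x y" and xy: "x \<in> {1..2*n}" "y \<in> {1..2*n}"
  shows "strand_end n (\<tau> \<circ> \<sigma>) x = strand_end n (\<tau> \<circ> \<sigma>) y"
proof -
  \<comment> \<open>the bottom column reached from a point of the three-row diagram\<close>
  define h where "h a = (if a \<le> 2*n then strand_end n \<tau> (strand_end n \<sigma> a) else a - 2*n)" for a
  have "h (outpt n x) = h (outpt n y)"
  proof (rule concat_reach_invariant[where E = "\<lambda>a b. h a = h b", OF _ _ _ assms(3)])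
    show "h a = h b" if "samebl (perm_part n \<sigma>) a b" for a b
      using that unfolding samebl_perm_part_iff[OF \<sigma>] by (simp add: h_def)
    show "h (a + n) = h (b + n)" if "samebl (perm_part n \<tau>) a b" for a b
      using that unfolding samebl_perm_part_iff[OF \<tau>] by (auto simp: h_def strand_end_def)
  qed (intro equivpI reflpI sympI transpI; simp)
  moreover have "h (outpt n z) = strand_end n (\<tau> \<circ> \<sigma>) z" if z: "z \<in> {1..2*n}" for z
  proof (cases "z \<le> n")
    case True
    then have "\<sigma> z \<in> {1..n}" using bij_betwE[OF \<sigma>] z by auto
    then show ?thesis using True by (simp add: h_def outpt_def strand_end_def)
  qed (use z in \<open>simp add: h_def outpt_def strand_end_def\<close>)
  ultimately show ?thesis using xy by simp
qed

lemma concat_reach_perm_part_strand: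
  assumes \<sigma>: "bij_betw \<sigma> {1..n} {1..n}" and \<tau>: "bij_betw \<tau> {1..n} {1..n}" and i: "i \<in> {1..n}"
  shows "concat_reach n (perm_part n \<sigma>) (perm_part n \<tau>) i (n + \<tau> (\<sigma> i))"
proof -
  have \<sigma>i: "\<sigma> i \<in> {1..n}" and \<tau>\<sigma>i: "\<tau> (\<sigma> i) \<in> {1..n}"
    using bij_betwE[OF \<sigma>] bij_betwE[OF \<tau>] i by blast+
  have "(i, n + \<sigma> i) \<in> concat_rel n (perm_part n \<sigma>) (perm_part n \<tau>)"
    using i \<sigma>i by (intro concat_relI1) (simp add: samebl_perm_part_iff[OF \<sigma>] strand_end_def)
  moreover have "(\<sigma> i + n, n + \<tau> (\<sigma> i) + n) \<in> concat_rel n (perm_part n \<sigma>) (perm_part n \<tau>)"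
    using \<sigma>i \<tau>\<sigma>i by (intro concat_relI2) (simp add: samebl_perm_part_iff[OF \<tau>] strand_end_def)
  ultimately show ?thesis
    using i \<tau>\<sigma>i by (simp add: concat_reach_def outpt_def add.commute)
qed

lemma concat_perm_part:
  assumes \<sigma>: "bij_betw \<sigma> {1..n} {1..n}" and \<tau>: "bij_betw \<tau> {1..n} {1..n}"
  shows "concat n (perm_part n \<sigma>) (perm_part n \<tau>) = perm_part n (\<tau> \<circ> \<sigma>)"
proof -
  let ?A = "{1..2*n}" and ?reach = "concat_reach n (perm_part n \<sigma>) (perm_part n \<tau>)"
  have \<tau>\<sigma>: "bij_betw (\<tau> \<circ> \<sigma>) {1..n} {1..n}" using \<sigma> \<tau> by (rule bij_betw_trans)
  have reach: "equivp ?reach" by (rule equivp_concat_reach)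
  have "perm_part n (\<tau> \<circ> \<sigma>) = ?A // rel_on ?A ?reach"
  proof (rule partition_on_eq_quotient_rel_onI[OF partition_on_perm_part[OF \<tau>\<sigma>]])
    fix x y assume xy: "x \<in> ?A" "y \<in> ?A"
    show "samebl (perm_part n (\<tau> \<circ> \<sigma>)) x y \<longleftrightarrow> ?reach x y"
    proof
      assume "samebl (perm_part n (\<tau> \<circ> \<sigma>)) x y"
      then obtain i where "i \<in> {1..n}" "x \<in> {i, n + \<tau> (\<sigma> i)}" "y \<in> {i, n + \<tau> (\<sigma> i)}"
        unfolding samebl_def perm_part_eq_image by auto
      then show "?reach x y"
        using concat_reach_perm_part_strand[OF \<sigma> \<tau>] equivp_reflp[OF reach] equivp_symp[OF reach] by auto
    next
      assume "?reach x y"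
      then show "samebl (perm_part n (\<tau> \<circ> \<sigma>)) x y"
        using concat_reach_perm_part_strand_end[OF \<sigma> \<tau>] xy by (simp add: samebl_perm_part_iff[OF \<tau>\<sigma>])
    qed
  qed
  then show ?thesis by (simp add: concat_eq_quotient)
qed

lemma concat_reach_boxed_part_imp_linked:
  assumes "concat_reach n (boxed_part n L) (boxed_part n M) x y" and xy: "x \<in> {1..2*n}" "y \<in> {1..2*n}"
  shows "linked (L \<union> M) (column n x) (column n y)"
proof -
  \<comment> \<open>the column of a point of the three-row diagram\<close>
  define col where "col a = (if a \<le> 2*n then column n a else a - 2*n)" for a
  have "linked (L \<union> M) (col (outpt n x)) (col (outpt n y))"
  proof (rule concat_reach_invariant[where E = "\<lambda>a b. linked (L \<union> M) (col a) (col b)", OF _ _ _ assms(1)])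
    show "equivp (\<lambda>a b. linked (L \<union> M) (col a) (col b))"
      using equivp_vimage2p[OF equivp_linked, of col] by (simp add: vimage2p_def)
    show "linked (L \<union> M) (col a) (col b)" if "samebl (boxed_part n L) a b" for a b
      using that linked_mono[of L] unfolding samebl_boxed_part_iff by (simp add: col_def)
    have "col (z + n) = column n z" if "z \<in> {1..2*n}" for z using that by (simp add: col_def column_def)
    then show "linked (L \<union> M) (col (a + n)) (col (b + n))" if "samebl (boxed_part n M) a b" for a b
      using that linked_mono[of M] unfolding samebl_boxed_part_iff by simp
  qed
  moreover have "col (outpt n z) = column n z" if "z \<in> {1..2*n}" for z
    using that by (simp add: col_def outpt_def column_def)
  ultimately show ?thesis using xy by simp
qed

lemma concat_reach_boxed_part_column:
  assumes x: "x \<in> {1..2*n}"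
  shows "concat_reach n (boxed_part n L) (boxed_part n M) (column n x) x"
proof (cases "x \<le> n")
  case True
  then show ?thesis using equivp_reflp[OF equivp_concat_reach] by (simp add: column_def)
next
  case False
  let ?R = "concat_rel n (boxed_part n L) (boxed_part n M)"
  have "(x - n, x) \<in> ?R"
    using x False by (intro concat_relI1) (auto simp: samebl_boxed_part_iff column_def)
  moreover have "(x - n + n, x + n) \<in> ?R"
    using x False by (intro concat_relI2) (auto simp: samebl_boxed_part_iff column_def)
  ultimately have "(x - n, x + n) \<in> ?R\<^sup>*"
    using False by (simp add: rtrancl_trans[OF r_into_rtrancl r_into_rtrancl])
  moreover have "x - n \<le> n" using x by auto
  ultimately show ?thesis using False by (simp add: concat_reach_def outpt_def column_def)
qed

lemma concat_reach_boxed_part_Suc: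
  assumes i: "i \<in> L \<union> M" "1 \<le> i" "Suc i \<le> n"
  shows "concat_reach n (boxed_part n L) (boxed_part n M) i (Suc i)"
proof -
  let ?R = "concat_rel n (boxed_part n L) (boxed_part n M)"
  have "(i, Suc i) \<in> ?R\<^sup>*" if "i \<in> L"
    using i that by (intro r_into_rtrancl concat_relI1) (simp add: samebl_boxed_part_iff column_def linked_Suc)
  moreover have "(i, Suc i) \<in> ?R\<^sup>*" if "i \<in> M"
  proof -
    have "(i, n + i) \<in> ?R" "(n + Suc i, Suc i) \<in> ?R"
      using i by (auto intro!: concat_relI1 simp: samebl_boxed_part_iff column_def)
    moreover have "(i + n, Suc i + n) \<in> ?R"
      using i that by (intro concat_relI2) (simp add: samebl_boxed_part_iff column_def linked_Suc)
    ultimately show ?thesis by (simp add: add.commute)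
  qed
  ultimately show ?thesis using i by (auto simp: concat_reach_def outpt_def)
qed

lemma concat_boxed_part: "concat n (boxed_part n L) (boxed_part n M) = boxed_part n (L \<union> M)"
proof -
  let ?A = "{1..2*n}" and ?reach = "concat_reach n (boxed_part n L) (boxed_part n M)"
  have reach: "equivp ?reach" by (rule equivp_concat_reach)
  have top: "?reach a b" if ab: "linked (L \<union> M) a b" "a \<in> {1..n}" "b \<in> {1..n}" for a b
  proof (rule linked_imp_rel[where E = ?reach])
    show "symp ?reach" by (rule sympI) (rule equivp_symp[OF reach])
    show "transp ?reach" by (rule transpI) (rule equivp_transp[OF reach])
    show "?reach a a" "?reach b b" by (rule equivp_reflp[OF reach])+
    show "linked (L \<union> M) a b" by (rule ab(1))
    show "?reach i (Suc i)" if "i \<in> L \<union> M" "min a b \<le> i" "i < max a b" for i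
      using that ab(2,3) by (intro concat_reach_boxed_part_Suc) auto
  qed
  have "boxed_part n (L \<union> M) = ?A // rel_on ?A ?reach"
  proof (rule partition_on_eq_quotient_rel_onI[OF partition_on_boxed_part])
    fix x y assume xy: "x \<in> ?A" "y \<in> ?A"
    have "?reach x y \<longleftrightarrow> linked (L \<union> M) (column n x) (column n y)"
    proof
      assume "?reach x y"
      then show "linked (L \<union> M) (column n x) (column n y)"
        using concat_reach_boxed_part_imp_linked xy by blast
    next
      assume "linked (L \<union> M) (column n x) (column n y)"
      then have "?reach (column n x) (column n y)" using top column_in_range xy by blast
      then show "?reach x y"
        using concat_reach_boxed_part_column[OF xy(1)] concat_reach_boxed_part_column[OF xy(2)]
          equivp_symp[OF reach] equivp_transp[OF reach] by meson
    qed
    then show "samebl (boxed_part n (L \<union> M)) x y \<longleftrightarrow> ?reach x y"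
      using xy by (simp add: samebl_boxed_part_iff)
  qed
  then show ?thesis by (simp add: concat_eq_quotient)
qed

section \<open>Sorting by adjacent transpositions\<close>

lemma swp_swp [simp]: "swp i (swp i k) = k"
  by (simp add: swp_def)

lemma bij_swp: "i \<in> {1..n-1} \<Longrightarrow> bij_betw (swp i) {1..n} {1..n}"
  by (rule bij_betw_byWitness[where f' = "swp i"]) (auto simp: swp_def)

lemma linked_swp: "i \<in> L \<Longrightarrow> linked L k (swp i k)"
  by (auto simp: swp_def linked_Suc linked_commute)

lemma bij_fold_swp: "set js \<subseteq> {1..n-1} \<Longrightarrow> bij_betw (fold swp js) {1..n} {1..n}"
proof (induction js rule: rev_induct)
  case (snoc j js)
  then have "bij_betw (swp j \<circ> fold swp js) {1..n} {1..n}"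
    by (intro bij_betw_trans[OF _ bij_swp]) auto
  then show ?case by (simp add: comp_def)
qed simp

(* One pass of bubble sort: since sigma fixes every point above p, sigma p <= p, and composing
   with swp (sigma p) moves the value at p one step up inside the L-interval of p. *)
lemma linked_perm_sort_step:
  assumes "bij_betw \<sigma> {1..n} {1..n}" "\<forall>i\<in>{1..n}. linked L i (\<sigma> i)"
    and "\<forall>i\<in>{1..n}. p < i \<longrightarrow> \<sigma> i = i" and p: "p \<in> {1..n}"
  shows "\<exists>js \<tau>. set js \<subseteq> L \<and> bij_betw \<tau> {1..n} {1..n} \<and> (\<forall>i\<in>{1..n}. linked L i (\<tau> i))
    \<and> (\<forall>i\<in>{1..n}. p \<le> i \<longrightarrow> \<tau> i = i) \<and> (\<forall>i\<in>{1..n}. \<sigma> i = fold swp js (\<tau> i))"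
  using assms(1-3)
proof (induction "p - \<sigma> p" arbitrary: \<sigma> rule: less_induct)
  case less
  note \<sigma> = less.prems(1) and linked = less.prems(2) and fixed = less.prems(3)
  have \<sigma>p: "\<sigma> p \<in> {1..n}" using bij_betwE[OF \<sigma>] p by blast
  have "\<sigma> p \<le> p"
  proof (rule ccontr)
    assume "\<not> \<sigma> p \<le> p"
    then have "\<sigma> (\<sigma> p) = \<sigma> p" using fixed \<sigma>p by simp
    then have "\<sigma> p = p" using bij_betw_imp_inj_on[OF \<sigma>] \<sigma>p p by (auto dest: inj_onD)
    then show False using \<open>\<not> \<sigma> p \<le> p\<close> by simp
  qed
  show ?case
  proof (cases "\<sigma> p = p")
    case True
    have "\<forall>i\<in>{1..n}. p \<le> i \<longrightarrow> \<sigma> i = i" using fixed True by (auto simp: le_less)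
    then show ?thesis using \<sigma> linked by (intro exI[of _ "[]"] exI[of _ \<sigma>]) simp
  next
    case False
    define j where "j = \<sigma> p"
    have j: "j < p" "j \<in> {1..n-1}" using False \<open>\<sigma> p \<le> p\<close> \<sigma>p p by (auto simp: j_def)
    have "linked L p j" using linked p by (simp add: j_def)
    then have jL: "j \<in> L" using j(1) unfolding linked_def by simp
    define \<sigma>' where "\<sigma>' = swp j \<circ> \<sigma>"
    have "bij_betw \<sigma>' {1..n} {1..n}" unfolding \<sigma>'_def using \<sigma> bij_swp[OF j(2)] by (rule bij_betw_trans)
    moreover have "\<forall>i\<in>{1..n}. linked L i (\<sigma>' i)"
      using linked linked_trans linked_swp[OF jL] by (simp add: \<sigma>'_def) blast
    moreover have "\<forall>i\<in>{1..n}. p < i \<longrightarrow> \<sigma>' i = i" using fixed j(1) by (auto simp: \<sigma>'_def swp_def)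
    moreover have "p - \<sigma>' p < p - \<sigma> p" using j(1) by (simp add: \<sigma>'_def swp_def j_def)
    ultimately obtain js \<tau> where IH: "set js \<subseteq> L" "bij_betw \<tau> {1..n} {1..n}" "\<forall>i\<in>{1..n}. linked L i (\<tau> i)"
      "\<forall>i\<in>{1..n}. p \<le> i \<longrightarrow> \<tau> i = i" "\<forall>i\<in>{1..n}. \<sigma>' i = fold swp js (\<tau> i)"
      using less.hyps by blast
    have "\<sigma> i = swp j (\<sigma>' i)" for i by (simp add: \<sigma>'_def)
    then have "\<forall>i\<in>{1..n}. \<sigma> i = fold swp (js @ [j]) (\<tau> i)" using IH(5) by simp
    then show ?thesis using IH(1-4) jL by (intro exI[of _ "js @ [j]"] exI[of _ \<tau>]) auto
  qed
qed

lemma linked_perm_eq_fold_swp: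
  assumes "bij_betw \<sigma> {1..n} {1..n}" "\<forall>i\<in>{1..n}. linked L i (\<sigma> i)"
  shows "\<exists>js. set js \<subseteq> L \<and> (\<forall>i\<in>{1..n}. \<sigma> i = fold swp js i)"
proof -
  have "\<exists>js. set js \<subseteq> L \<and> (\<forall>i\<in>{1..n}. \<sigma> i = fold swp js i)"
    if "bij_betw \<sigma> {1..n} {1..n}" "\<forall>i\<in>{1..n}. linked L i (\<sigma> i)" "\<forall>i\<in>{1..n}. p < i \<longrightarrow> \<sigma> i = i"
    for p \<sigma>
    using that
  proof (induction p arbitrary: \<sigma>)
    case 0
    then show ?case by (intro exI[of _ "[]"]) auto
  next
    case (Suc p)
    show ?case
    proof (cases "Suc p \<le> n")
      case False
      then have "\<forall>i\<in>{1..n}. p < i \<longrightarrow> \<sigma> i = i" by auto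
      then show ?thesis using Suc.IH Suc.prems(1,2) by blast
    next
      case True
      then obtain js \<tau> where \<tau>: "set js \<subseteq> L" "bij_betw \<tau> {1..n} {1..n}" "\<forall>i\<in>{1..n}. linked L i (\<tau> i)"
        "\<forall>i\<in>{1..n}. Suc p \<le> i \<longrightarrow> \<tau> i = i" "\<forall>i\<in>{1..n}. \<sigma> i = fold swp js (\<tau> i)"
        using linked_perm_sort_step[OF Suc.prems] True by auto
      then obtain js' where js': "set js' \<subseteq> L" "\<forall>i\<in>{1..n}. \<tau> i = fold swp js' i"
        using Suc.IH[OF \<tau>(2,3)] by (auto simp: Suc_le_eq)
      then have "\<forall>i\<in>{1..n}. \<sigma> i = fold swp (js' @ js) i" using \<tau>(5) by simp
      then show ?thesis using \<tau>(1) js'(1) by (intro exI[of _ "js' @ js"]) auto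
    qed
  qed
  moreover have "\<forall>i\<in>{1..n}. n < i \<longrightarrow> \<sigma> i = i" by simp
  ultimately show ?thesis using assms by blast
qed

section \<open>Generation of BR(S_n)\<close>

definition br_sym_pairs :: "nat \<Rightarrow> (spart \<times> spart) set" where
  "br_sym_pairs n = {(perm_part n \<sigma>, boxed_part n L) | \<sigma> L.
     bij_betw \<sigma> {1..n} {1..n} \<and> L \<subseteq> {1..n-1} \<and> (\<forall>i\<in>{1..n}. linked L i (\<sigma> i))}"

lemma br_sym_pairsI:
  "bij_betw \<sigma> {1..n} {1..n} \<Longrightarrow> L \<subseteq> {1..n-1} \<Longrightarrow> \<forall>i\<in>{1..n}. linked L i (\<sigma> i) \<Longrightarrow>
    (perm_part n \<sigma>, boxed_part n L) \<in> br_sym_pairs n"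
  unfolding br_sym_pairs_def by blast

lemma BR_sym_part_eq: "BR n (sym_part n) = br_sym_pairs n"
proof
  show "BR n (sym_part n) \<subseteq> br_sym_pairs n"
  proof
    fix x assume "x \<in> BR n (sym_part n)"
    then obtain I J where x: "x = (I, J)" "I \<in> sym_part n" "boxed n J" "refines I J"
      by (auto simp: BR_def)
    obtain \<sigma> where \<sigma>: "bij_betw \<sigma> {1..n} {1..n}" "I = perm_part n \<sigma>"
      using sym_part_imp_perm_part[OF x(2)] by blast
    define L where "L = {i \<in> {1..n-1}. samebl J i (Suc i)}"
    have "J = boxed_part n L" unfolding L_def by (rule boxed_eq_boxed_part[OF x(3)])
    moreover have "\<forall>i\<in>{1..n}. linked L i (\<sigma> i)"
      using x(4) refines_perm_part_boxed_part_iff[OF \<sigma>(1)] \<sigma>(2) calculation by simp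
    moreover have "L \<subseteq> {1..n-1}" by (auto simp: L_def)
    ultimately show "x \<in> br_sym_pairs n" using x(1) \<sigma> br_sym_pairsI by simp
  qed
  show "br_sym_pairs n \<subseteq> BR n (sym_part n)"
  proof
    fix x assume "x \<in> br_sym_pairs n"
    then obtain \<sigma> L where x: "x = (perm_part n \<sigma>, boxed_part n L)" "bij_betw \<sigma> {1..n} {1..n}"
      "\<forall>i\<in>{1..n}. linked L i (\<sigma> i)"
      unfolding br_sym_pairs_def by blast
    then show "x \<in> BR n (sym_part n)"
      using perm_part_in_sym_part[OF x(2)] boxed_boxed_part refines_perm_part_boxed_part_iff[OF x(2)]
      unfolding BR_def by simp
  qed
qed

abbreviation ez_generators :: "nat \<Rightarrow> (spart \<times> spart) set" where
  "ez_generators n \<equiv> {e_gen n i | i. i \<in> {1..n-1}} \<union> {z_gen n i | i. i \<in> {1..n-1}}"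

lemma br_mult_perm_boxed:
  assumes "bij_betw \<sigma> {1..n} {1..n}" "bij_betw \<tau> {1..n} {1..n}"
  shows "br_mult n (perm_part n \<sigma>, boxed_part n L) (perm_part n \<tau>, boxed_part n M) =
    (perm_part n (\<tau> \<circ> \<sigma>), boxed_part n (L \<union> M))"
  by (simp add: br_mult_def concat_perm_part[OF assms] concat_boxed_part)

lemma e_gen_eq: "i \<in> {1..n-1} \<Longrightarrow> e_gen n i = (perm_part n id, boxed_part n {i})"
  by (simp add: e_gen_def one_part_def b_part_eq_boxed_part)

lemma z_gen_eq: "i \<in> {1..n-1} \<Longrightarrow> z_gen n i = (perm_part n (swp i), boxed_part n {i})"
  by (simp add: z_gen_def s_part_def b_part_eq_boxed_part)

lemma br_generated_subset: "br_generated n (ez_generators n) \<subseteq> br_sym_pairs n"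
proof
  fix x assume "x \<in> br_generated n (ez_generators n)"
  then show "x \<in> br_sym_pairs n"
  proof (induction rule: br_generated.induct)
    case unit
    have "(perm_part n id, boxed_part n {}) \<in> br_sym_pairs n" by (rule br_sym_pairsI[OF bij_betw_id]) auto
    moreover have "perm_part n id = one_part n" by (simp add: one_part_def)
    moreover have "boxed_part n {} = one_part n" by (simp add: one_part_eq_boxed_part)
    ultimately show ?case by simp
  next
    case (gen g)
    then obtain i where i: "i \<in> {1..n-1}" "g = e_gen n i \<or> g = z_gen n i" by blast
    have "linked {i} k (swp i k)" for k by (simp add: linked_swp)
    then show ?case
      using i br_sym_pairsI[OF bij_betw_id] br_sym_pairsI[OF bij_swp[OF i(1)]]
      unfolding e_gen_eq[OF i(1)] z_gen_eq[OF i(1)] by auto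
  next
    case (mult x y)
    then obtain \<sigma> L \<tau> M where
      x: "x = (perm_part n \<sigma>, boxed_part n L)" "bij_betw \<sigma> {1..n} {1..n}" "L \<subseteq> {1..n-1}"
        "\<forall>i\<in>{1..n}. linked L i (\<sigma> i)" and
      y: "y = (perm_part n \<tau>, boxed_part n M)" "bij_betw \<tau> {1..n} {1..n}" "M \<subseteq> {1..n-1}"
        "\<forall>i\<in>{1..n}. linked M i (\<tau> i)"
      unfolding br_sym_pairs_def by blast
    have "\<forall>i\<in>{1..n}. linked (L \<union> M) i (\<tau> (\<sigma> i))"
    proof
      fix i assume i: "i \<in> {1..n}"
      then have "\<sigma> i \<in> {1..n}" using bij_betwE[OF x(2)] by blast
      then have "linked (L \<union> M) i (\<sigma> i)" "linked (L \<union> M) (\<sigma> i) (\<tau> (\<sigma> i))"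
        using x(4) y(4) i linked_mono by blast+
      then show "linked (L \<union> M) i (\<tau> (\<sigma> i))" by (rule linked_trans)
    qed
    then show ?case
      using x(3) y(3) br_sym_pairsI[OF bij_betw_trans[OF x(2) y(2)], of "L \<union> M"]
      by (simp add: x(1) y(1) br_mult_perm_boxed[OF x(2) y(2)])
  qed
qed

lemma one_boxed_part_in_br_generated:
  assumes "L \<subseteq> {1..n-1}"
  shows "(perm_part n id, boxed_part n L) \<in> br_generated n (ez_generators n)"
proof -
  have "finite L" using assms finite_subset by blast
  then show ?thesis using assms
  proof (induction rule: finite_induct)
    case empty
    have "(perm_part n id, boxed_part n {}) = (one_part n, one_part n)"
      by (simp only: one_part_def one_part_eq_boxed_part[symmetric])
    then show ?case by (simp only:) (rule br_generated.unit)
  next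
    case (insert i L)
    then have i: "i \<in> {1..n-1}" by simp
    have IH: "(perm_part n id, boxed_part n L) \<in> br_generated n (ez_generators n)"
      using insert.IH insert.prems by blast
    have "e_gen n i \<in> br_generated n (ez_generators n)" using i by (intro br_generated.gen) blast
    then have gen: "(perm_part n id, boxed_part n {i}) \<in> br_generated n (ez_generators n)"
      by (simp only: e_gen_eq[OF i])
    have "br_mult n (perm_part n id, boxed_part n L) (perm_part n id, boxed_part n {i})
        \<in> br_generated n (ez_generators n)"
      using IH gen by (rule br_generated.mult)
    then show ?case
      by (simp only: br_mult_perm_boxed[OF bij_betw_id bij_betw_id] comp_id Un_insert_right Un_empty_right)
  qed
qed

lemma fold_swp_in_br_generated:
  assumes L: "L \<subseteq> {1..n-1}" and js: "set js \<subseteq> L"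
  shows "(perm_part n (fold swp js), boxed_part n L) \<in> br_generated n (ez_generators n)"
  using js
proof (induction js rule: rev_induct)
  case Nil
  then show ?case using one_boxed_part_in_br_generated[OF L] by (simp only: fold.simps)
next
  case (snoc j js)
  then have j: "j \<in> L" "j \<in> {1..n-1}" using L by auto
  have IH: "(perm_part n (fold swp js), boxed_part n L) \<in> br_generated n (ez_generators n)"
    using snoc by simp
  have "z_gen n j \<in> br_generated n (ez_generators n)" using j by (intro br_generated.gen) blast
  then have gen: "(perm_part n (swp j), boxed_part n {j}) \<in> br_generated n (ez_generators n)"
    by (simp only: z_gen_eq[OF j(2)])
  have "br_mult n (perm_part n (fold swp js), boxed_part n L) (perm_part n (swp j), boxed_part n {j})
      \<in> br_generated n (ez_generators n)"
    using IH gen by (rule br_generated.mult)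
  moreover have "bij_betw (fold swp js) {1..n} {1..n}" using snoc.prems L by (intro bij_fold_swp) auto
  moreover have "fold swp (js @ [j]) = swp j \<circ> fold swp js" by simp
  moreover have "L \<union> {j} = L" using j(1) by blast
  ultimately show ?case by (simp only: br_mult_perm_boxed[OF _ bij_swp[OF j(2)]])
qed

lemma br_sym_pairs_subset: "br_sym_pairs n \<subseteq> br_generated n (ez_generators n)"
proof
  fix x assume "x \<in> br_sym_pairs n"
  then obtain \<sigma> L where x: "x = (perm_part n \<sigma>, boxed_part n L)" "bij_betw \<sigma> {1..n} {1..n}"
    "L \<subseteq> {1..n-1}" "\<forall>i\<in>{1..n}. linked L i (\<sigma> i)"
    unfolding br_sym_pairs_def by blast
  obtain js where js: "set js \<subseteq> L" "\<forall>i\<in>{1..n}. \<sigma> i = fold swp js i"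
    using linked_perm_eq_fold_swp[OF x(2,4)] by blast
  have "perm_part n \<sigma> = perm_part n (fold swp js)" using js(2) by (intro perm_part_cong) simp
  then show "x \<in> br_generated n (ez_generators n)"
    using fold_swp_in_br_generated[OF x(3) js(1)] x(1) by simp
qed

theorem proposition5p12:
  fixes n :: nat
  shows "BR n (sym_part n) =
         br_generated n ({e_gen n i | i. i \<in> {1..n-1}} \<union> {z_gen n i | i. i \<in> {1..n-1}})"
  using br_generated_subset br_sym_pairs_subset by (simp add: BR_sym_part_eq equalityI)

end
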